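(* Let $L$ be a Lie algebra over a field $K$ of characteristic different from $2$ and $3$. Define $u:Z^2_{comm}(L)\to ADer(L,L^* )$ by $(u(\varphi)(x))(y)=\varphi(x,y)$, and $v:ADer(L,L^* )\to C(L)$ by $v(d)(x,y)=d(x)(y)-d(y)(x)$, for $x,y\in L$. Then $u$ and $v$ are well-defined linear maps (i.e. $u(\varphi)$ is an antiderivation and $v(d)$ is a cyclic skew-symmetric form), and the sequence $$0\to Z^2_{comm}(L)\xrightarrow{u}ADer(L,L^* )\xrightarrow{v}C(L)$$ is exact, i.e. $u$ is injective and $\operatorname{Im}u=\operatorname{Ker}v$.
   Context: $Z^2_{comm}(L)$ is the space of commutative $2$-cocycles: symmetric bilinear forms $\varphi:L\times L\to K$ with $\varphi([x,y],z)+\varphi([z,x],y)+\varphi([y,z],x)=0$ for all $x,y,z\in L$. $L^*$ is the coadjoint module, with action $(x\bullet f)(y)=-f([x,y])$. For an $L$-module $M$, an antiderivation $d:L\to M$ is a linear map with $d([x,y])=y\bullet d(x)-x\bullet d(y)$ for all $x,y\in L$; $ADer(L,M)$ is the space of these. For $M=L^*$ this condition reads $d([x,y])(z)=d(x)([y,z])-d(y)([x,z])$ for all $x,y,z\in L$. A bilinear form $\psi$ on $L$ is cyclic if $\psi([x,y],z)=\psi([z,x],y)$ for all $x,y,z\in L$; $C(L)$ is the space of cyclic skew-symmetric bilinear forms on $L$. *)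

theory Defs
  imports Complex_Main "HOL-Library.Function_Algebras"
begin

definition lie_algebra :: "('k::field \<Rightarrow> 'v::ab_group_add \<Rightarrow> 'v) \<Rightarrow> ('v \<Rightarrow> 'v \<Rightarrow> 'v) \<Rightarrow> bool" where
  "lie_algebra s br \<longleftrightarrow>
     vector_space s \<and>
     (\<forall>x. Vector_Spaces.linear s s (br x)) \<and>
     (\<forall>y. Vector_Spaces.linear s s (\<lambda>x. br x y)) \<and>
     (\<forall>x. br x x = 0) \<and>
     (\<forall>x y z. br x (br y z) + br y (br z x) + br z (br x y) = 0)"

definition fscale :: "'k::field \<Rightarrow> ('v \<Rightarrow> 'k) \<Rightarrow> ('v \<Rightarrow> 'k)" where
  "fscale a f = (\<lambda>z. a * f z)"

definition dual_space :: "('k::field \<Rightarrow> 'v::ab_group_add \<Rightarrow> 'v) \<Rightarrow> ('v \<Rightarrow> 'k) set" where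
  "dual_space s = {f. Vector_Spaces.linear s (*) f}"

definition coad :: "('v \<Rightarrow> 'v \<Rightarrow> 'v) \<Rightarrow> 'v \<Rightarrow> ('v \<Rightarrow> 'k::field) \<Rightarrow> ('v \<Rightarrow> 'k)" where
  "coad br x f = (\<lambda>y. - f (br x y))"

definition bilinear_form :: "('k::field \<Rightarrow> 'v::ab_group_add \<Rightarrow> 'v) \<Rightarrow> ('v \<Rightarrow> 'v \<Rightarrow> 'k) \<Rightarrow> bool" where
  "bilinear_form s \<phi> \<longleftrightarrow>
     (\<forall>x. Vector_Spaces.linear s (*) (\<phi> x)) \<and> (\<forall>y. Vector_Spaces.linear s (*) (\<lambda>x. \<phi> x y))"

definition Z2comm :: "('k::field \<Rightarrow> 'v::ab_group_add \<Rightarrow> 'v) \<Rightarrow> ('v \<Rightarrow> 'v \<Rightarrow> 'v) \<Rightarrow> ('v \<Rightarrow> 'v \<Rightarrow> 'k) set" where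
  "Z2comm s br = {\<phi>. bilinear_form s \<phi> \<and> (\<forall>x y. \<phi> x y = \<phi> y x) \<and>
     (\<forall>x y z. \<phi> (br x y) z + \<phi> (br z x) y + \<phi> (br y z) x = 0)}"

definition ADer_coad :: "('k::field \<Rightarrow> 'v::ab_group_add \<Rightarrow> 'v) \<Rightarrow> ('v \<Rightarrow> 'v \<Rightarrow> 'v) \<Rightarrow> ('v \<Rightarrow> 'v \<Rightarrow> 'k) set" where
  "ADer_coad s br = {d. (\<forall>x. d x \<in> dual_space s) \<and> Vector_Spaces.linear s fscale d \<and>
     (\<forall>x y. d (br x y) = coad br y (d x) - coad br x (d y))}"

definition cyclic_forms :: "('k::field \<Rightarrow> 'v::ab_group_add \<Rightarrow> 'v) \<Rightarrow> ('v \<Rightarrow> 'v \<Rightarrow> 'v) \<Rightarrow> ('v \<Rightarrow> 'v \<Rightarrow> 'k) set" where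
  "cyclic_forms s br = {\<psi>. bilinear_form s \<psi> \<and> (\<forall>x y. \<psi> x y = - \<psi> y x) \<and>
     (\<forall>x y z. \<psi> (br x y) z = \<psi> (br z x) y)}"

definition u_map :: "('v \<Rightarrow> 'v \<Rightarrow> 'k) \<Rightarrow> ('v \<Rightarrow> 'v \<Rightarrow> 'k)" where
  "u_map \<phi> = (\<lambda>x. \<lambda>y. \<phi> x y)"

definition v_map :: "('v \<Rightarrow> 'v \<Rightarrow> 'k::ab_group_add) \<Rightarrow> ('v \<Rightarrow> 'v \<Rightarrow> 'k)" where
  "v_map d = (\<lambda>x y. d x y - d y x)"

end

theory Submission
  imports Defs
begin

text \<open>Since u is the identity on bilinear forms, everything reduces to comparing the defining
  identities. An antiderivation into the coadjoint module is the same thing as a bilinear form d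
  with d([x,y],z) = d(y,[x,z]) - d(x,[y,z]); for symmetric d, skew-symmetry of the bracket turns
  this into the cocycle identity and conversely, while for general d the antisymmetrisation
  d(x,y) - d(y,x) is cyclic. No assumption on the characteristic is needed.\<close>

lemma vector_space_mult: "vector_space ((*) :: 'k::field \<Rightarrow> 'k \<Rightarrow> 'k)"
  unfolding vector_space_def by (simp add: algebra_simps)

lemma vector_space_fscale: "vector_space (fscale :: 'k::field \<Rightarrow> ('v \<Rightarrow> 'k) \<Rightarrow> 'v \<Rightarrow> 'k)"
  unfolding vector_space_def fscale_def by (simp add: fun_eq_iff algebra_simps)

lemma linear_neg: "Vector_Spaces.linear s1 s2 f \<Longrightarrow> f (- x) = - f x"
  by (rule module_hom.neg[OF module_hom_linearI])

lemma lie_algebra_bracket_skew: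
  assumes "lie_algebra s br"
  shows "br y x = - br x y"
proof -
  have left: "\<And>x a b. br x (a + b) = br x a + br x b"
    and right: "\<And>y a b. br (a + b) y = br a y + br b y"
    and alt: "\<And>x. br x x = 0"
    using assms unfolding lie_algebra_def Vector_Spaces.linear_iff by blast+
  have "0 = br (x + y) (x + y)" by (simp add: alt)
  also have "\<dots> = br x x + br y x + (br x y + br y y)" by (simp add: left right)
  also have "\<dots> = br y x + br x y" by (simp add: alt)
  finally show ?thesis by (simp add: eq_neg_iff_add_eq_0 add.commute)
qed

lemma linear_fscale_iff:
  assumes "vector_space s"
  shows "Vector_Spaces.linear s fscale d \<longleftrightarrow> (\<forall>y. Vector_Spaces.linear s (*) (\<lambda>x. d x y))"
  using assms vector_space_mult vector_space_fscale
  unfolding Vector_Spaces.linear_iff fscale_def by (auto simp: fun_eq_iff)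

lemma ADer_coad_eq:
  assumes "vector_space s"
  shows "ADer_coad s br =
    {d. bilinear_form s d \<and> (\<forall>x y z. d (br x y) z = d y (br x z) - d x (br y z))}"
  unfolding ADer_coad_def bilinear_form_def dual_space_def coad_def
    linear_fscale_iff[OF assms] by (auto simp: fun_eq_iff)

lemma bilinear_form_bracket_skew:
  assumes "lie_algebra s br" and "bilinear_form s d"
  shows "d a (br c b) = - d a (br b c)"
  using assms(2) lie_algebra_bracket_skew[OF assms(1)] linear_neg
  unfolding bilinear_form_def by metis

lemma bilinear_form_v_map:
  assumes "bilinear_form s d"
  shows "bilinear_form s (v_map d)"
proof -
  have hom: "module_hom s (*) (d x)" "module_hom s (*) (\<lambda>x. d x y)" for x y
    using assms unfolding bilinear_form_def linear_iff_module_hom by blast+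
  then interpret module_pair s "(*)"
    by (simp add: module_pair_def module_hom_def)
  show ?thesis
    unfolding bilinear_form_def v_map_def linear_iff_module_hom
    using hom by (simp add: module_hom_sub)
qed

lemma v_map_eq_0_iff: "v_map d = (\<lambda>x y. 0) \<longleftrightarrow> (\<forall>x y. d x y = d y x)"
  unfolding v_map_def by (simp add: fun_eq_iff)

lemma u_map_eq [simp]: "u_map \<phi> = \<phi>"
  unfolding u_map_def by simp

lemma Z2comm_subset_ADer_coad:
  assumes "lie_algebra s br"
  shows "Z2comm s br \<subseteq> ADer_coad s br"
proof
  fix \<phi> assume "\<phi> \<in> Z2comm s br"
  then have bil: "bilinear_form s \<phi>" and sym: "\<And>x y. \<phi> x y = \<phi> y x"
    and cocycle: "\<And>x y z. \<phi> (br x y) z + \<phi> (br z x) y + \<phi> (br y z) x = 0"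
    unfolding Z2comm_def by blast+
  have "\<phi> (br x y) z = \<phi> y (br x z) - \<phi> x (br y z)" for x y z
  proof -
    have "\<phi> (br z x) y = - \<phi> y (br x z)"
      using sym bilinear_form_bracket_skew[OF assms bil] by metis
    with cocycle[of x y z] sym[of "br y z" x] show ?thesis
      by (simp add: algebra_simps)
  qed
  with bil show "\<phi> \<in> ADer_coad s br"
    using assms by (simp add: ADer_coad_eq lie_algebra_def)
qed

lemma v_map_ADer_coad_cyclic:
  assumes "lie_algebra s br" and "d \<in> ADer_coad s br"
  shows "v_map d \<in> cyclic_forms s br"
proof -
  have bil: "bilinear_form s d"
    and ader: "\<And>x y z. d (br x y) z = d y (br x z) - d x (br y z)"
    using assms by (simp_all add: ADer_coad_eq lie_algebra_def)
  have "bilinear_form s (v_map d)"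
    using bil by (rule bilinear_form_v_map)
  moreover have "v_map d (br x y) z = v_map d (br z x) y" for x y z
    using ader[of x y z] ader[of z x y] bilinear_form_bracket_skew[OF assms(1) bil, of x z y]
      bilinear_form_bracket_skew[OF assms(1) bil, of y z x]
    unfolding v_map_def by (simp add: algebra_simps)
  ultimately show ?thesis
    unfolding cyclic_forms_def by (simp add: v_map_def)
qed

lemma symmetric_ADer_coad_in_Z2comm:
  assumes "lie_algebra s br" and "d \<in> ADer_coad s br" and sym: "\<And>x y. d x y = d y x"
  shows "d \<in> Z2comm s br"
proof -
  have bil: "bilinear_form s d"
    and ader: "\<And>x y z. d (br x y) z = d y (br x z) - d x (br y z)"
    using assms(1,2) by (simp_all add: ADer_coad_eq lie_algebra_def)
  have "d (br x y) z + d (br z x) y + d (br y z) x = 0" for x y z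
    using ader[of x y z] sym[of "br z x" y] sym[of "br y z" x]
      bilinear_form_bracket_skew[OF assms(1) bil, of y z x]
    by (simp add: algebra_simps)
  with bil sym show ?thesis
    unfolding Z2comm_def by blast
qed

lemma Z2comm_eq_ker_v_map:
  assumes "lie_algebra s br"
  shows "Z2comm s br = {d \<in> ADer_coad s br. v_map d = (\<lambda>x y. 0)}"
  using Z2comm_subset_ADer_coad[OF assms] symmetric_ADer_coad_in_Z2comm[OF assms]
  unfolding v_map_eq_0_iff by (auto simp: Z2comm_def)

theorem proposition1p3:
  fixes s :: "'k::field \<Rightarrow> 'v::ab_group_add \<Rightarrow> 'v"
    and br :: "'v \<Rightarrow> 'v \<Rightarrow> 'v"
  assumes "lie_algebra s br"
    and "(2::'k) \<noteq> 0" and "(3::'k) \<noteq> 0"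
  shows "(\<forall>\<phi>\<in>Z2comm s br. u_map \<phi> \<in> ADer_coad s br)
    \<and> (\<forall>d\<in>ADer_coad s br. v_map d \<in> cyclic_forms s br)
    \<and> (\<forall>a b. \<forall>\<phi>\<in>Z2comm s br. \<forall>\<psi>\<in>Z2comm s br.
          u_map (\<lambda>x y. a * \<phi> x y + b * \<psi> x y) = (\<lambda>x y. a * u_map \<phi> x y + b * u_map \<psi> x y))
    \<and> (\<forall>a b. \<forall>d\<in>ADer_coad s br. \<forall>e\<in>ADer_coad s br.
          v_map (\<lambda>x y. a * d x y + b * e x y) = (\<lambda>x y. a * v_map d x y + b * v_map e x y))
    \<and> inj_on u_map (Z2comm s br)
    \<and> u_map ` Z2comm s br = {d \<in> ADer_coad s br. v_map d = (\<lambda>x y. 0)}"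
proof (intro conjI ballI allI)
  show "\<And>\<phi>. \<phi> \<in> Z2comm s br \<Longrightarrow> u_map \<phi> \<in> ADer_coad s br"
    using Z2comm_subset_ADer_coad[OF assms(1)] by auto
  show "\<And>d. d \<in> ADer_coad s br \<Longrightarrow> v_map d \<in> cyclic_forms s br"
    by (rule v_map_ADer_coad_cyclic[OF assms(1)])
  show "\<And>a b \<phi> \<psi>. u_map (\<lambda>x y. a * \<phi> x y + b * \<psi> x y) = (\<lambda>x y. a * u_map \<phi> x y + b * u_map \<psi> x y)"
    by simp
  show "\<And>(a::'k) b d e. v_map (\<lambda>x y. a * d x y + b * e x y) = (\<lambda>x y. a * v_map d x y + b * v_map e x y)"
    unfolding v_map_def by (simp add: fun_eq_iff algebra_simps)
  show "inj_on u_map (Z2comm s br)"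
    by (simp add: inj_on_def)
  show "u_map ` Z2comm s br = {d \<in> ADer_coad s br. v_map d = (\<lambda>x y. 0)}"
    using Z2comm_eq_ker_v_map[OF assms(1)] by simp
qed

end
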